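(* Let $p(y)=\prod_{j=1}^n(y+\theta_j)$ be a real polynomial with $0\le\theta_j\le1$ for all $j$. Then the bivariate polynomial $p\big(y-xy(y+1)\big)=\sum_{k=0}^{n}p^{(k)}(y)\frac{(-xy(y+1))^k}{k!}$ is stable.
   Context: A polynomial $P\in\mathbb{C}[x,y]$ is stable if $P(x,y)\neq0$ whenever $\operatorname{Im}x>0$ and $\operatorname{Im}y>0$. *)

theory Defs
  imports Complex_Main "HOL-Computational_Algebra.Polynomial"
begin

definition stable2 :: "(complex \<Rightarrow> complex \<Rightarrow> complex) \<Rightarrow> bool" where
  "stable2 P \<longleftrightarrow> (\<forall>x y. Im x > 0 \<longrightarrow> Im y > 0 \<longrightarrow> P x y \<noteq> 0)"

end

theory Submission
  imports Defs
begin

text \<open>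
  Since p(y) = \<Prod>j (y + \<theta>_j), the bivariate polynomial
  p(y - x y (y+1)) is the product of the factors  y - x y (y+1) + \<theta>_j,
  so it suffices to show that no single factor vanishes on the product of
  upper half planes.  If  y - x y (y+1) + t = 0  with Im y > 0, then
  y and y + 1 are nonzero and partial fractions give
      x = (y + t) / (y (y+1)) = t / y + (1 - t) / (y + 1).
  Both 1/y and 1/(y+1) lie in the open lower half plane, and for 0 \<le> t \<le> 1
  this expression is a convex combination of them, hence Im x < 0,
  contradicting Im x > 0.
\<close>

lemma map_poly_of_real_mult:
  fixes p q :: "real poly"
  shows "map_poly (of_real :: real \<Rightarrow> 'a::{real_algebra_1,comm_ring_1}) (p * q)
         = map_poly of_real p * map_poly of_real q"
  by (rule poly_eqI) (simp add: coeff_map_poly coeff_mult)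

lemma map_poly_of_real_prod:
  fixes f :: "'b \<Rightarrow> real poly"
  shows "map_poly (of_real :: real \<Rightarrow> 'a::{real_algebra_1,comm_ring_1}) (\<Prod>j\<in>A. f j)
         = (\<Prod>j\<in>A. map_poly of_real (f j))"
  by (induction A rule: infinite_finite_induct) (simp_all add: map_poly_of_real_mult)

lemma poly_of_real_linear_product:
  fixes \<theta> :: "'b \<Rightarrow> real" and z :: complex
  shows "poly (map_poly complex_of_real (\<Prod>j\<in>A. [:\<theta> j, 1:])) z
         = (\<Prod>j\<in>A. z + of_real (\<theta> j))"
  by (simp add: map_poly_of_real_prod poly_prod map_poly_pCons add.commute)

lemma Im_inverse_upper_half_plane:
  fixes y :: complex
  assumes "Im y > 0"
  shows "Im (1 / y) < 0"
  using assms by (simp add: Im_complex_div_lt_0)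

lemma convex_combination_neg:
  fixes a b t :: real
  assumes "a < 0" "b < 0" "0 \<le> t" "t \<le> 1"
  shows "t * a + (1 - t) * b < 0"
proof (cases "t = 0")
  case True
  then show ?thesis using assms by simp
next
  case False
  then have "t * a < 0" using assms by (simp add: mult_pos_neg)
  moreover have "(1 - t) * b \<le> 0" using assms by (simp add: mult_nonneg_nonpos)
  ultimately show ?thesis by linarith
qed

lemma factor_nonzero:
  fixes x y :: complex and t :: real
  assumes x: "Im x > 0" and y: "Im y > 0" and t: "0 \<le> t" "t \<le> 1"
  shows "y - x * y * (y + 1) + of_real t \<noteq> 0"
proof
  assume zero: "y - x * y * (y + 1) + of_real t = 0"
  have y1: "Im (y + 1) > 0" using y by simp
  then have nonzero: "y \<noteq> 0" "y + 1 \<noteq> 0"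
    using y by (metis less_irrefl zero_complex.sel(2))+
  have "x * (y * (y + 1)) = y + of_real t"
    using zero by (simp add: algebra_simps)
  then have "x = (y + of_real t) / (y * (y + 1))"
    using nonzero by (simp add: eq_divide_eq)
  also have "\<dots> = of_real t * (1 / y) + of_real (1 - t) * (1 / (y + 1))"
    using nonzero by (simp add: field_simps)
  finally have "Im x = t * Im (1 / y) + (1 - t) * Im (1 / (y + 1))"
    by (simp add: Im_divide)
  also have "\<dots> < 0"
    using convex_combination_neg Im_inverse_upper_half_plane[OF y]
      Im_inverse_upper_half_plane[OF y1] t by blast
  finally show False using x by simp
qed

theorem mainTheorem6:
  fixes n :: nat and \<theta> :: "nat \<Rightarrow> real" and p :: "real poly"
  assumes "\<forall>j\<in>{1..n}. 0 \<le> \<theta> j \<and> \<theta> j \<le> 1"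
    and "p = (\<Prod>j=1..n. [:\<theta> j, 1:])"
  shows "stable2 (\<lambda>x y. poly (map_poly complex_of_real p) (y - x * y * (y + 1)))"
  unfolding stable2_def
proof (intro allI impI)
  fix x y :: complex
  assume "Im x > 0" "Im y > 0"
  then have "\<forall>j\<in>{1..n}. y - x * y * (y + 1) + of_real (\<theta> j) \<noteq> 0"
    using assms(1) factor_nonzero by blast
  then show "poly (map_poly complex_of_real p) (y - x * y * (y + 1)) \<noteq> 0"
    by (simp add: assms(2) poly_of_real_linear_product)
qed

end
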